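(* Let $\mathcal{A}$ be a union-closed family with base set $[n]$ and height $h$, and suppose $|\mathcal{A}|>1$. Then there exists an element of $[n]$ that is contained in at least $\frac{|\mathcal{A}|+h-3}{h-1}$ member sets of $\mathcal{A}$.
   Context: A family of sets $\mathcal{A}$ is union-closed if it is a finite family of distinct finite sets with at least one nonempty member set, and $X,Y\in\mathcal{A}$ implies $X\cup Y\in\mathcal{A}$ (the empty set may be a member). The base set $\bigcup_{A\in\mathcal{A}}A$ is denoted $[n]=\{1,\dots,n\}$. A chain in $\mathcal{A}$ is a subfamily any two distinct members of which are comparable under proper inclusion; the height $h$ of $\mathcal{A}$ is the maximum size of a chain in $\mathcal{A}$. *)

theory Defs
  imports Complex_Main
begin

definition union_closed :: "'a set set \<Rightarrow> bool" where
  "union_closed \<A> \<longleftrightarrow> finite \<A> \<and> (\<forall>X\<in>\<A>. finite X) \<and> (\<exists>X\<in>\<A>. X \<noteq> {})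
     \<and> (\<forall>X\<in>\<A>. \<forall>Y\<in>\<A>. X \<union> Y \<in> \<A>)"

definition is_chain_in :: "'a set set \<Rightarrow> 'a set set \<Rightarrow> bool" where
  "is_chain_in \<C> \<A> \<longleftrightarrow> \<C> \<subseteq> \<A> \<and> (\<forall>X\<in>\<C>. \<forall>Y\<in>\<C>. X \<noteq> Y \<longrightarrow> X \<subset> Y \<or> Y \<subset> X)"

definition height :: "'a set set \<Rightarrow> nat" where
  "height \<A> = Max {card \<C> | \<C>. is_chain_in \<C> \<A>}"

end

theory Submission
  imports Defs
begin

text \<open>
  Induction on \<open>|\<A>|\<close>. The top set \<open>U = \<Union>\<A>\<close> is a member; let \<open>S\<close> be a maximal member
  below it. A member not contained in \<open>S\<close> joins with \<open>S\<close> to \<open>U\<close>, hence contains \<open>U - S\<close>,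
  so any element of \<open>U - S\<close> lies in all \<open>|\<A>| - |\<B>|\<close> members outside
  \<open>\<B> = {Z \<in> \<A>. Z \<subseteq> S}\<close>. The family \<open>\<B>\<close> is union-closed and its chains are shorter
  by one, since \<open>U\<close> can be put on top of each of them; so by induction some element lies
  in at least \<open>(|\<B>| - 2)/(h - 2) + 1\<close> members of \<open>\<B>\<close>, and in \<open>U\<close> as well.
  One of these two elements meets the bound.
\<close>

lemma Union_mem_if_closed_under_union:
  assumes "\<forall>X\<in>\<A>. \<forall>Y\<in>\<A>. X \<union> Y \<in> \<A>" "finite \<F>" "\<F> \<noteq> {}" "\<F> \<subseteq> \<A>"
  shows "\<Union>\<F> \<in> \<A>"
  using assms(2-4)
proof (induction \<F> rule: finite_ne_induct)
  case (singleton X)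
  then show ?case by simp
next
  case (insert X \<F>)
  then show ?case using assms(1) by simp
qed

lemma chain_of_card_2_if_closed_under_union:
  assumes "\<forall>X\<in>\<A>. \<forall>Y\<in>\<A>. X \<union> Y \<in> \<A>" "finite \<A>" "card \<A> \<ge> 2"
  shows "\<exists>\<C>. is_chain_in \<C> \<A> \<and> card \<C> = 2"
proof -
  obtain X Y where XY: "X \<in> \<A>" "Y \<in> \<A>" "X \<noteq> Y"
    using assms(2,3) card_le_Suc0_iff_eq[of \<A>] by auto
  show ?thesis
  proof (cases "Y \<subseteq> X")
    case True
    then show ?thesis using XY
      by (intro exI[of _ "{X, Y}"]) (auto simp: is_chain_in_def)
  next
    case False
    then have "X \<subset> X \<union> Y" by blast
    then show ?thesis using XY assms(1)
      by (intro exI[of _ "{X, X \<union> Y}"]) (auto simp: is_chain_in_def)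
  qed
qed

lemma is_chain_in_insert_top:
  assumes "is_chain_in \<C> \<B>" "\<B> \<subseteq> \<A>" "U \<in> \<A>" "\<forall>Z\<in>\<C>. Z \<subset> U"
  shows "is_chain_in (insert U \<C>) \<A>"
  using assms unfolding is_chain_in_def by blast

lemma card_chain_le_height:
  assumes "finite \<A>" "is_chain_in \<C> \<A>"
  shows "card \<C> \<le> height \<A>"
proof -
  have "{card \<C> | \<C>. is_chain_in \<C> \<A>} \<subseteq> {..card \<A>}"
    using assms(1) by (auto simp: is_chain_in_def card_mono)
  then have "finite {card \<C> | \<C>. is_chain_in \<C> \<A>}"
    using finite_subset by blast
  then show ?thesis
    using assms(2) unfolding height_def by (auto intro: Max_ge)
qed

lemma two_le_chain_bound:
  assumes "\<forall>X\<in>\<A>. \<forall>Y\<in>\<A>. X \<union> Y \<in> \<A>" "finite \<A>" "card \<A> \<ge> 2"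
    and "\<And>\<C>. is_chain_in \<C> \<A> \<Longrightarrow> card \<C> \<le> k"
  shows "k \<ge> 2"
  using chain_of_card_2_if_closed_under_union[OF assms(1-3)] assms(4) by metis

lemma card_chain_below_le:
  assumes "finite \<A>" "\<Union>\<A> \<in> \<A>" "S \<subset> \<Union>\<A>"
    and "\<And>\<C>. is_chain_in \<C> \<A> \<Longrightarrow> card \<C> \<le> k"
    and "is_chain_in \<C> {Z\<in>\<A>. Z \<subseteq> S}"
  shows "card \<C> \<le> k - 1"
proof -
  have "\<C> \<subseteq> \<A>" and below_top: "\<forall>Z\<in>\<C>. Z \<subset> \<Union>\<A>"
    using assms(3,5) unfolding is_chain_in_def by auto
  then have "finite \<C>"
    using assms(1) finite_subset by blast
  moreover have "is_chain_in (insert (\<Union>\<A>) \<C>) \<A>"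
    using is_chain_in_insert_top[OF assms(5) _ assms(2) below_top] by blast
  moreover have "\<Union>\<A> \<notin> \<C>"
    using below_top by blast
  ultimately show ?thesis
    using assms(4)[of "insert (\<Union>\<A>) \<C>"] by auto
qed

lemma subset_if_not_subset_maximal_below_Union:
  assumes "\<forall>X\<in>\<A>. \<forall>Y\<in>\<A>. X \<union> Y \<in> \<A>"
    and "S \<in> \<A> - {\<Union>\<A>}" "\<forall>Z\<in>\<A> - {\<Union>\<A>}. S \<subseteq> Z \<longrightarrow> S = Z"
    and "Z \<in> \<A>" "\<not> Z \<subseteq> S"
  shows "\<Union>\<A> - S \<subseteq> Z"
proof -
  have "Z \<union> S \<in> \<A>" "S \<subseteq> Z \<union> S" "Z \<union> S \<noteq> S"
    using assms(1,2,4,5) by auto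
  then have "Z \<union> S = \<Union>\<A>"
    using assms(3) by blast
  then show ?thesis by blast
qed

lemma card_diff_below_le_card_containing:
  assumes "finite \<A>" "\<forall>X\<in>\<A>. \<forall>Y\<in>\<A>. X \<union> Y \<in> \<A>"
    and "S \<in> \<A> - {\<Union>\<A>}" "\<forall>Z\<in>\<A> - {\<Union>\<A>}. S \<subseteq> Z \<longrightarrow> S = Z"
    and "y \<in> \<Union>\<A> - S"
  shows "card \<A> - card {Z\<in>\<A>. Z \<subseteq> S} \<le> card {X\<in>\<A>. y \<in> X}"
proof -
  have "\<A> - {Z\<in>\<A>. Z \<subseteq> S} \<subseteq> {X\<in>\<A>. y \<in> X}"
    using subset_if_not_subset_maximal_below_Union[OF assms(2-4)] assms(5) by blast
  then have "card (\<A> - {Z\<in>\<A>. Z \<subseteq> S}) \<le> card {X\<in>\<A>. y \<in> X}"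
    using assms(1) by (intro card_mono) auto
  then show ?thesis
    using card_Diff_subset[of "{Z\<in>\<A>. Z \<subseteq> S}" \<A>] assms(1) by auto
qed

lemma card_containing_below_less:
  assumes "finite \<A>" "\<Union>\<A> \<in> \<A>" "S \<subset> \<Union>\<A>" "x \<in> \<Union>{Z\<in>\<A>. Z \<subseteq> S}"
  shows "card {X\<in>{Z\<in>\<A>. Z \<subseteq> S}. x \<in> X} < card {X\<in>\<A>. x \<in> X}"
proof -
  let ?below = "{X\<in>{Z\<in>\<A>. Z \<subseteq> S}. x \<in> X}"
  have "insert (\<Union>\<A>) ?below \<subseteq> {X\<in>\<A>. x \<in> X}"
    using assms(2,4) by auto
  then have "card (insert (\<Union>\<A>) ?below) \<le> card {X\<in>\<A>. x \<in> X}"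
    using assms(1) by (intro card_mono) auto
  moreover have "\<Union>\<A> \<notin> ?below" "finite ?below"
    using assms(1,3) by auto
  ultimately show ?thesis
    by simp
qed

lemma max_ge_of_weighted_bounds:
  fixes N b k c d :: real
  assumes "k \<ge> 3" "c \<ge> (b - 2) / (k - 2) + 2" "d \<ge> N - b"
  shows "max c d \<ge> (N - 2) / (k - 1) + 1"
proof -
  have c_bound: "(k - 2) * c \<ge> b - 2 + 2 * (k - 2)"
    using assms(1,2) by (simp add: field_simps)
  have "(k - 1) * ((N - 2) / (k - 1) + 1) = N + k - 3"
    using assms(1) by (simp add: field_simps)
  also have "\<dots> \<le> (k - 2) * c + d"
    using c_bound assms(1,3) by (simp add: algebra_simps)
  also have "\<dots> \<le> (k - 2) * max c d + max c d"
    using assms(1) by (intro add_mono mult_left_mono) auto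
  also have "\<dots> = (k - 1) * max c d"
    by algebra
  finally show ?thesis
    by (rule mult_left_le_imp_le) (use assms(1) in auto)
qed

lemma frequent_element_if_chains_bounded:
  fixes \<A> :: "'a set set"
  assumes "finite \<A>" "\<forall>X\<in>\<A>. \<forall>Y\<in>\<A>. X \<union> Y \<in> \<A>" "card \<A> \<ge> 2"
    and "\<And>\<C>. is_chain_in \<C> \<A> \<Longrightarrow> card \<C> \<le> k"
  shows "\<exists>x\<in>\<Union>\<A>. real (card {X\<in>\<A>. x \<in> X}) \<ge> (real (card \<A>) - 2) / (real k - 1) + 1"
  using assms
proof (induction "card \<A>" arbitrary: \<A> k rule: less_induct)
  case less
  note fin = less.prems(1) and closed = less.prems(2) and card_ge_2 = less.prems(3)
    and chain_le = less.prems(4)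
  have top_mem: "\<Union>\<A> \<in> \<A>"
    using Union_mem_if_closed_under_union[OF closed fin] card_ge_2 by force
  have "card (\<A> - {\<Union>\<A>}) > 0"
    using top_mem card_ge_2 by simp
  then have "\<A> - {\<Union>\<A>} \<noteq> {}"
    by force
  then obtain S where S: "S \<in> \<A> - {\<Union>\<A>}" and S_max: "\<forall>Z\<in>\<A> - {\<Union>\<A>}. S \<subseteq> Z \<longrightarrow> S = Z"
    using finite_has_maximal[of "\<A> - {\<Union>\<A>}"] fin by (metis finite_Diff)
  have S_psubset: "S \<subset> \<Union>\<A>"
    using S by blast
  then obtain y where y: "y \<in> \<Union>\<A> - S"
    by blast
  define \<B> where "\<B> = {Z\<in>\<A>. Z \<subseteq> S}"
  have \<B>_sub: "\<B> \<subseteq> \<A>" and fin_\<B>: "finite \<B>" and S_mem: "S \<in> \<B>" and top_nmem: "\<Union>\<A> \<notin> \<B>"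
    using fin S S_psubset unfolding \<B>_def by auto
  have card_\<B>_less: "card \<B> < card \<A>"
    using \<B>_sub top_mem top_nmem fin by (intro psubset_card_mono) auto
  have y_freq: "real (card {X\<in>\<A>. y \<in> X}) \<ge> real (card \<A>) - real (card \<B>)"
    using card_diff_below_le_card_containing[OF fin closed, of S y] S S_max y card_\<B>_less
    unfolding \<B>_def by linarith
  show ?case
  proof (cases "card \<B> \<ge> 2")
    case False
    have "card \<B> > 0"
      using S_mem fin_\<B> card_gt_0_iff by blast
    then have "real (card {X\<in>\<A>. y \<in> X}) \<ge> real (card \<A>) - 1"
      using False y_freq by linarith
    moreover have "(real (card \<A>) - 2) / (real k - 1) \<le> real (card \<A>) - 2"
      using two_le_chain_bound[OF closed fin card_ge_2 chain_le] card_ge_2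
      by (simp add: divide_le_eq mult_le_cancel_left1)
    ultimately show ?thesis
      using y by (intro bexI[of _ y]) auto
  next
    case True
    have closed_\<B>: "\<forall>X\<in>\<B>. \<forall>Y\<in>\<B>. X \<union> Y \<in> \<B>"
      using closed unfolding \<B>_def by auto
    note chain_le_\<B> = card_chain_below_le[OF fin top_mem S_psubset chain_le, folded \<B>_def]
    have k_ge_3: "k \<ge> 3"
      using two_le_chain_bound[OF closed_\<B> fin_\<B> True chain_le_\<B>] by simp
    then have "real (k - 1) - 1 = real k - 2"
      by (simp add: of_nat_diff)
    then obtain x where x_mem: "x \<in> \<Union>\<B>"
      and x_freq_\<B>: "real (card {X\<in>\<B>. x \<in> X}) \<ge> (real (card \<B>) - 2) / (real k - 2) + 1"
      using less.hyps[OF card_\<B>_less fin_\<B> closed_\<B> True chain_le_\<B>] by auto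
    have "card {X\<in>\<B>. x \<in> X} < card {X\<in>\<A>. x \<in> X}"
      using card_containing_below_less[OF fin top_mem S_psubset] x_mem
      unfolding \<B>_def by blast
    then have x_freq: "real (card {X\<in>\<A>. x \<in> X}) \<ge> (real (card \<B>) - 2) / (real k - 2) + 2"
      using x_freq_\<B> by linarith
    have "x \<in> \<Union>\<A>"
      using x_mem \<B>_sub by blast
    then show ?thesis
      using max_ge_of_weighted_bounds[OF _ x_freq y_freq] k_ge_3 y
      unfolding le_max_iff_disj by auto
  qed
qed

theorem theorem1p2:
  fixes \<A> :: "nat set set" and n h :: nat
  assumes "union_closed \<A>"
    and "\<Union>\<A> = {1..n}"
    and "h = height \<A>"
    and "card \<A> > 1"
  shows "\<exists>x\<in>{1..n}. real (card {X\<in>\<A>. x \<in> X}) \<ge> (real (card \<A>) + real h - 3) / (real h - 1)"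
proof -
  have fin: "finite \<A>" and closed: "\<forall>X\<in>\<A>. \<forall>Y\<in>\<A>. X \<union> Y \<in> \<A>"
    using assms(1) unfolding union_closed_def by auto
  have card_ge_2: "card \<A> \<ge> 2"
    using assms(4) by simp
  have chain_le: "card \<C> \<le> h" if "is_chain_in \<C> \<A>" for \<C>
    using card_chain_le_height[OF fin that] assms(3) by simp
  have "h \<ge> 2"
    using two_le_chain_bound[OF closed fin card_ge_2 chain_le] .
  then have "(real (card \<A>) - 2) / (real h - 1) + 1 = (real (card \<A>) + real h - 3) / (real h - 1)"
    by (simp add: field_simps)
  then show ?thesis
    using frequent_element_if_chains_bounded[OF fin closed card_ge_2 chain_le] assms(2) by auto
qed

end
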